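(* Suppose $0<p<1$ and $q>0$. Let $(S,I)$ be an endemic equilibrium and $\kappa=d_SS+d_II$ (a positive constant). Then $\frac{\kappa}{d_S}\ge N_*$, where $N_*$ is the unique positive solution of $$\frac{N}{|\Omega|}=N_*+\Big(\frac\beta\gamma\Big)_{\max}^{\frac1{1-p}}N_*^{\frac{q}{1-p}}.$$ Furthermore, if $d_S\ge d_I$, then $\frac{\kappa}{d_S}\le\frac{N}{|\Omega|}$.
   Context: Let $\Omega\subset\mathbb R^n$ be a bounded domain with smooth boundary, $\nu$ the outward unit normal on $\partial\Omega$, and $|\Omega|$ its Lebesgue measure. Let $\beta,\gamma$ be positive Hölder continuous functions on $\bar\Omega$, $N>0$, $q>0$, $0<p<1$, and $d_S,d_I>0$. Consider the system $$d_S\Delta S-\beta S^qI^p+\gamma I=0,\quad d_I\Delta I+\beta S^qI^p-\gamma I=0\ \text{ in }\Omega,\qquad \partial_\nu S=\partial_\nu I=0\ \text{ on }\partial\Omega,\qquad \int_\Omega(S+I)=N.$$ An endemic equilibrium is a nonnegative classical solution $(S,I)$ with $I\not\equiv0$. For continuous $f$ on $\bar\Omega$, $f_{\max}=\max_{\bar\Omega}f$. *)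

theory Defs
  imports "HOL-Analysis.Analysis"
begin

fun dirderiv :: "'a::euclidean_space list \<Rightarrow> ('a \<Rightarrow> real) \<Rightarrow> 'a \<Rightarrow> real" where
  "dirderiv [] f = f"
| "dirderiv (b # bs) f = (\<lambda>x. frechet_derivative (dirderiv bs f) (at x) b)"

definition smooth_on :: "'a::euclidean_space set \<Rightarrow> ('a \<Rightarrow> real) \<Rightarrow> bool" where
  "smooth_on U f \<longleftrightarrow>
     (\<forall>bs. set bs \<subseteq> Basis \<longrightarrow> (\<forall>x\<in>U. dirderiv bs f differentiable (at x)))"

definition grad :: "('a::euclidean_space \<Rightarrow> real) \<Rightarrow> 'a \<Rightarrow> 'a" where
  "grad f x = (\<Sum>b\<in>Basis. frechet_derivative f (at x) b *\<^sub>R b)"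

definition local_defining_fun :: "'a::euclidean_space set \<Rightarrow> 'a \<Rightarrow> 'a set \<Rightarrow> ('a \<Rightarrow> real) \<Rightarrow> bool" where
  "local_defining_fun \<Omega> x U \<phi> \<longleftrightarrow>
     open U \<and> x \<in> U \<and> smooth_on U \<phi> \<and> (\<forall>y\<in>U. grad \<phi> y \<noteq> 0) \<and>
     \<Omega> \<inter> U = {y\<in>U. \<phi> y < 0}"

definition smooth_boundary :: "'a::euclidean_space set \<Rightarrow> bool" where
  "smooth_boundary \<Omega> \<longleftrightarrow> (\<forall>x\<in>frontier \<Omega>. \<exists>U \<phi>. local_defining_fun \<Omega> x U \<phi>)"

definition smooth_bounded_domain :: "'a::euclidean_space set \<Rightarrow> bool" where
  "smooth_bounded_domain \<Omega> \<longleftrightarrow>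
     open \<Omega> \<and> connected \<Omega> \<and> \<Omega> \<noteq> {} \<and> bounded \<Omega> \<and> smooth_boundary \<Omega>"

definition outward_normal :: "'a::euclidean_space set \<Rightarrow> 'a \<Rightarrow> 'a" where
  "outward_normal \<Omega> x =
     (SOME n. \<exists>U \<phi>. local_defining_fun \<Omega> x U \<phi> \<and> n = grad \<phi> x /\<^sub>R norm (grad \<phi> x))"

definition holder_continuous_on :: "'a::euclidean_space set \<Rightarrow> ('a \<Rightarrow> real) \<Rightarrow> bool" where
  "holder_continuous_on A f \<longleftrightarrow>
     (\<exists>\<alpha> C. 0 < \<alpha> \<and> \<alpha> \<le> 1 \<and> (\<forall>x\<in>A. \<forall>y\<in>A. \<bar>f x - f y\<bar> \<le> C * dist x y powr \<alpha>))"

definition C2_on :: "'a::euclidean_space set \<Rightarrow> ('a \<Rightarrow> real) \<Rightarrow> bool" where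
  "C2_on \<Omega> u \<longleftrightarrow>
     (\<forall>x\<in>\<Omega>. u differentiable (at x)) \<and>
     (\<forall>b\<in>Basis. \<forall>x\<in>\<Omega>. dirderiv [b] u differentiable (at x)) \<and>
     (\<forall>b\<in>Basis. \<forall>c\<in>Basis. continuous_on \<Omega> (dirderiv [c, b] u))"

definition C1_closure :: "'a::euclidean_space set \<Rightarrow> ('a \<Rightarrow> real) \<Rightarrow> bool" where
  "C1_closure \<Omega> u \<longleftrightarrow>
     (\<forall>x\<in>closure \<Omega>. u differentiable (at x within closure \<Omega>)) \<and>
     (\<forall>b\<in>Basis. continuous_on (closure \<Omega>)
        (\<lambda>x. frechet_derivative u (at x within closure \<Omega>) b))"

definition laplacian :: "('a::euclidean_space \<Rightarrow> real) \<Rightarrow> 'a \<Rightarrow> real" where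
  "laplacian u x = (\<Sum>b\<in>Basis. dirderiv [b, b] u x)"

definition normal_deriv :: "'a::euclidean_space set \<Rightarrow> ('a \<Rightarrow> real) \<Rightarrow> 'a \<Rightarrow> real" where
  "normal_deriv \<Omega> u x = frechet_derivative u (at x within closure \<Omega>) (outward_normal \<Omega> x)"

definition fmax :: "'a::euclidean_space set \<Rightarrow> ('a \<Rightarrow> real) \<Rightarrow> real" where
  "fmax \<Omega> f = Sup (f ` closure \<Omega>)"

definition endemic_equilibrium ::
  "'a::euclidean_space set \<Rightarrow> real \<Rightarrow> real \<Rightarrow> real \<Rightarrow> real \<Rightarrow> real \<Rightarrow>
   ('a \<Rightarrow> real) \<Rightarrow> ('a \<Rightarrow> real) \<Rightarrow> ('a \<Rightarrow> real) \<Rightarrow> ('a \<Rightarrow> real) \<Rightarrow> bool" where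
  "endemic_equilibrium \<Omega> dS dI N p q \<beta> \<gamma> S I \<longleftrightarrow>
     C2_on \<Omega> S \<and> C2_on \<Omega> I \<and> C1_closure \<Omega> S \<and> C1_closure \<Omega> I \<and>
     (\<forall>x\<in>closure \<Omega>. 0 \<le> S x \<and> 0 \<le> I x) \<and>
     (\<forall>x\<in>\<Omega>. dS * laplacian S x - \<beta> x * S x powr q * I x powr p + \<gamma> x * I x = 0) \<and>
     (\<forall>x\<in>\<Omega>. dI * laplacian I x + \<beta> x * S x powr q * I x powr p - \<gamma> x * I x = 0) \<and>
     (\<forall>x\<in>frontier \<Omega>. normal_deriv \<Omega> S x = 0 \<and> normal_deriv \<Omega> I x = 0) \<and>
     ((\<lambda>x. S x + I x) has_integral N) \<Omega> \<and>
     (\<exists>x\<in>closure \<Omega>. I x \<noteq> 0)"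

end

(* Adding the two equations shows that w = d_S S + d_I I is harmonic in Omega with zero Neumann
   data. An interior maximum of w spreads over the connected domain (strong maximum principle), and
   a boundary maximum would have positive outward derivative (Hopf lemma), so w is a constant kappa.
   Hence S <= kappa/d_S. At a maximum point of I the reaction term beta S^q I^p - gamma I cannot be
   negative, for otherwise I would be strictly subharmonic near that point; this bounds
   I <= (beta/gamma)_max^(1/(1-p)) (kappa/d_S)^(q/(1-p)). Integrating S + I over Omega gives
   N/|Omega| <= kappa/d_S + (beta/gamma)_max^(1/(1-p)) (kappa/d_S)^(q/(1-p)), and as
   t + c t^(q/(1-p)) is increasing, kappa/d_S >= N_*. If d_S >= d_I then S + I >= kappa/d_S,
   and integrating gives kappa/d_S <= N/|Omega|.

   The maximum principles are proved from scratch: the Hopf lemma on a ball by comparison with the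
   barrier exp(-alpha |x - z|^2), and the interior sphere condition at the boundary from a local
   defining function, whose gradient is locally Lipschitz. *)

theory Submission
  imports Defs
begin

section \<open>Second derivatives at interior maxima\<close>

definition twice_differentiable_on :: "'a::euclidean_space set \<Rightarrow> ('a \<Rightarrow> real) \<Rightarrow> bool" where
  "twice_differentiable_on G u \<longleftrightarrow>
     (\<forall>x\<in>G. u differentiable (at x)) \<and> (\<forall>b\<in>Basis. \<forall>x\<in>G. dirderiv [b] u differentiable (at x))"

lemma twice_differentiable_on_subset:
  "twice_differentiable_on G u \<Longrightarrow> H \<subseteq> G \<Longrightarrow> twice_differentiable_on H u"
  unfolding twice_differentiable_on_def by blast

lemma C2_on_imp_twice_differentiable_on: "C2_on G u \<Longrightarrow> twice_differentiable_on G u"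
  unfolding twice_differentiable_on_def C2_on_def by blast

lemma frechet_derivative_lincomb:
  fixes u v :: "'a::euclidean_space \<Rightarrow> real"
  assumes "u differentiable (at x)" "v differentiable (at x)"
  shows "frechet_derivative (\<lambda>y. a * u y + c * v y) (at x) =
     (\<lambda>h. a * frechet_derivative u (at x) h + c * frechet_derivative v (at x) h)"
proof -
  have "((\<lambda>y. a * u y + c * v y) has_derivative
     (\<lambda>h. a * frechet_derivative u (at x) h + c * frechet_derivative v (at x) h)) (at x)"
    using assms unfolding frechet_derivative_works by (auto intro!: derivative_eq_intros)
  then show ?thesis by (rule frechet_derivative_at[symmetric])
qed

lemma has_derivative_dirderiv_lincomb:
  fixes u v :: "'a::euclidean_space \<Rightarrow> real"
  assumes G: "open G" "x \<in> G" and b: "b \<in> Basis"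
    and u: "twice_differentiable_on G u" and v: "twice_differentiable_on G v"
  shows "(dirderiv [b] (\<lambda>y. a * u y + c * v y) has_derivative
      (\<lambda>h. a * frechet_derivative (dirderiv [b] u) (at x) h
         + c * frechet_derivative (dirderiv [b] v) (at x) h)) (at x)"
proof -
  have eq: "dirderiv [b] (\<lambda>y. a * u y + c * v y) y = a * dirderiv [b] u y + c * dirderiv [b] v y"
    if "y \<in> G" for y
    using frechet_derivative_lincomb[of u y v a c] u v that
    unfolding twice_differentiable_on_def by simp
  have "((\<lambda>y. a * dirderiv [b] u y + c * dirderiv [b] v y) has_derivative
      (\<lambda>h. a * frechet_derivative (dirderiv [b] u) (at x) h
         + c * frechet_derivative (dirderiv [b] v) (at x) h)) (at x)"
    using u v G b unfolding twice_differentiable_on_def frechet_derivative_works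
    by (auto intro!: derivative_eq_intros)
  then show ?thesis
    by (rule has_derivative_transform_within_open[OF _ G]) (metis eq)
qed

lemma twice_differentiable_on_lincomb:
  fixes u v :: "'a::euclidean_space \<Rightarrow> real"
  assumes G: "open G" and u: "twice_differentiable_on G u" and v: "twice_differentiable_on G v"
  shows "twice_differentiable_on G (\<lambda>y. a * u y + c * v y)"
  unfolding twice_differentiable_on_def
proof safe
  fix x assume "x \<in> G"
  then show "(\<lambda>y. a * u y + c * v y) differentiable (at x)"
    using u v unfolding twice_differentiable_on_def by (auto intro!: derivative_intros)
next
  fix b :: 'a and x assume "b \<in> Basis" "x \<in> G"
  then show "dirderiv [b] (\<lambda>y. a * u y + c * v y) differentiable (at x)"
    using has_derivative_dirderiv_lincomb[OF G _ _ u v] unfolding differentiable_def by blast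
qed

lemma laplacian_lincomb:
  fixes u v :: "'a::euclidean_space \<Rightarrow> real"
  assumes G: "open G" "x \<in> G"
    and u: "twice_differentiable_on G u" and v: "twice_differentiable_on G v"
  shows "laplacian (\<lambda>y. a * u y + c * v y) x = a * laplacian u x + c * laplacian v x"
proof -
  have "dirderiv [b, b] (\<lambda>y. a * u y + c * v y) x = a * dirderiv [b, b] u x + c * dirderiv [b, b] v x"
    if "b \<in> Basis" for b
    using frechet_derivative_at[OF has_derivative_dirderiv_lincomb[OF G that u v], symmetric]
    by simp
  then show ?thesis
    unfolding laplacian_def by (simp add: sum.distrib sum_distrib_left)
qed

lemma has_real_derivative_along_line:
  fixes f :: "'a::real_normed_vector \<Rightarrow> real"
  assumes "(f has_derivative f') (at (y + t *\<^sub>R b))"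
  shows "((\<lambda>s. f (y + s *\<^sub>R b)) has_real_derivative f' b) (at t)"
proof -
  have "((\<lambda>s. y + s *\<^sub>R b) has_derivative (\<lambda>s. s *\<^sub>R b)) (at t)"
    by (auto intro!: derivative_eq_intros)
  from diff_chain_at[OF this assms]
  have "((\<lambda>s. f (y + s *\<^sub>R b)) has_derivative (\<lambda>s. f' (s *\<^sub>R b))) (at t)"
    by (simp add: o_def)
  moreover have "(\<lambda>s. f' (s *\<^sub>R b)) = (\<lambda>s. f' b * s)"
    using linear_scale[OF has_derivative_linear[OF assms]] by (auto simp: fun_eq_iff)
  ultimately show ?thesis
    unfolding has_field_derivative_def by simp
qed

lemma second_derivative_nonpos_at_max:
  fixes h k :: "real \<Rightarrow> real"
  assumes \<delta>: "0 < \<delta>"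
    and h: "\<And>t. 0 \<le> t \<Longrightarrow> t < \<delta> \<Longrightarrow> (h has_real_derivative k t) (at t)"
    and max: "\<And>t. 0 \<le> t \<Longrightarrow> t < \<delta> \<Longrightarrow> h t \<le> h 0"
    and k0: "k 0 = 0"
    and k: "(k has_real_derivative c) (at 0)"
  shows "c \<le> 0"
proof (rule ccontr)
  assume "\<not> c \<le> 0"
  have "((\<lambda>t. k t / t) \<longlongrightarrow> c) (at_right 0)"
    using k k0 by (simp add: has_field_derivative_iff filterlim_at_split)
  then have "eventually (\<lambda>t. 0 < k t / t) (at_right 0)"
    using \<open>\<not> c \<le> 0\<close> by (intro order_tendstoD) auto
  then obtain b where b: "0 < b" "\<And>t. 0 < t \<Longrightarrow> t < b \<Longrightarrow> 0 < k t / t"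
    unfolding eventually_at_right_field by auto
  define t where "t = min b \<delta> / 2"
  have t: "0 < t" "t < b" "t < \<delta>" using b \<delta> unfolding t_def by auto
  obtain s where s: "0 < s" "s < t" "h t - h 0 = (t - 0) * k s"
    using MVT2[of 0 t h k] t h by auto
  have "0 < k s" using b(2)[of s] s t by (simp add: zero_less_divide_iff)
  then have "0 < (t - 0) * k s" using t by simp
  then show False using s(3) t max[of t] by linarith
qed

lemma dirderiv_twice_nonpos_at_max:
  fixes u :: "'a::euclidean_space \<Rightarrow> real"
  assumes G: "open G" "y \<in> G" and u: "\<forall>x\<in>G. u differentiable (at x)"
    and b: "b \<in> Basis" and du: "dirderiv [b] u differentiable (at y)"
    and max: "\<forall>x\<in>G. u x \<le> u y"
  shows "dirderiv [b, b] u y \<le> 0"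
proof -
  obtain \<delta> where \<delta>: "0 < \<delta>" "ball y \<delta> \<subseteq> G" using G open_contains_ball by blast
  have inG: "y + t *\<^sub>R b \<in> G" if "0 \<le> t" "t < \<delta>" for t
    using that b \<delta> by (intro subsetD[OF \<delta>(2)]) (auto simp: dist_norm)
  define g where "g = dirderiv [b] u"
  have h: "((\<lambda>s. u (y + s *\<^sub>R b)) has_real_derivative g (y + t *\<^sub>R b)) (at t)"
    if "0 \<le> t" "t < \<delta>" for t
    unfolding g_def dirderiv.simps
    by (rule has_real_derivative_along_line) (use u inG[OF that] frechet_derivative_works in blast)
  have "frechet_derivative u (at y) = (\<lambda>v. 0)"
    using u G(2) max
    by (intro differential_zero_maxmin[OF G(2,1), where f = u]) (auto simp: frechet_derivative_works)
  then have k0: "g (y + 0 *\<^sub>R b) = 0" unfolding g_def by simp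
  have k: "((\<lambda>s. g (y + s *\<^sub>R b)) has_real_derivative frechet_derivative g (at y) b) (at 0)"
    using du unfolding g_def frechet_derivative_works by (intro has_real_derivative_along_line) simp
  have "frechet_derivative g (at y) b \<le> 0"
    by (rule second_derivative_nonpos_at_max[OF \<delta>(1) h _ k0 k]) (use max inG in auto)
  then show ?thesis unfolding g_def by simp
qed

lemma laplacian_nonpos_at_max:
  fixes u :: "'a::euclidean_space \<Rightarrow> real"
  assumes "open G" "y \<in> G" "twice_differentiable_on G u" "\<forall>x\<in>G. u x \<le> u y"
  shows "laplacian u y \<le> 0"
  unfolding laplacian_def
  using assms dirderiv_twice_nonpos_at_max[OF assms(1,2)]
  by (intro sum_nonpos) (auto simp: twice_differentiable_on_def)

section \<open>The Hopf lemma on a ball\<close>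

definition gaussian_barrier :: "real \<Rightarrow> 'a::euclidean_space \<Rightarrow> 'a \<Rightarrow> real" where
  "gaussian_barrier \<alpha> z x = exp (- \<alpha> * ((x - z) \<bullet> (x - z)))"

lemma inner_diff_eq_dist_sq: "(x - z) \<bullet> (x - z) = (dist z x)\<^sup>2"
  by (simp add: dist_norm power2_norm_eq_inner norm_minus_commute)

lemma gaussian_barrier_dist: "gaussian_barrier \<alpha> z x = exp (- \<alpha> * (dist z x)\<^sup>2)"
  by (simp add: gaussian_barrier_def inner_diff_eq_dist_sq)

lemma gaussian_barrier_pos: "0 < gaussian_barrier \<alpha> z x"
  by (simp add: gaussian_barrier_def)

lemma gaussian_barrier_le_one: "0 \<le> \<alpha> \<Longrightarrow> gaussian_barrier \<alpha> z x \<le> 1"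
  by (simp add: gaussian_barrier_dist)

lemma gaussian_barrier_has_derivative:
  "(gaussian_barrier \<alpha> z has_derivative
     (\<lambda>h. - 2 * \<alpha> * gaussian_barrier \<alpha> z x * ((x - z) \<bullet> h))) (at x)"
proof -
  have "((\<lambda>x. (x - z) \<bullet> (x - z)) has_derivative (\<lambda>h. 2 * ((x - z) \<bullet> h))) (at x)"
    by (rule has_derivative_eq_rhs, (rule derivative_intros)+) (simp add: fun_eq_iff inner_commute)
  from has_derivative_exp[OF has_derivative_mult_right[OF this, of "- \<alpha>"]] show ?thesis
    unfolding gaussian_barrier_def [abs_def] by (simp add: mult_ac)
qed

lemma dirderiv_gaussian_barrier:
  "dirderiv [b] (gaussian_barrier \<alpha> z) = (\<lambda>x. - 2 * \<alpha> * gaussian_barrier \<alpha> z x * ((x - z) \<bullet> b))"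
  by (rule ext) (simp add: frechet_derivative_at[OF gaussian_barrier_has_derivative, symmetric])

lemma dirderiv_gaussian_barrier_has_derivative:
  "(dirderiv [b] (gaussian_barrier \<alpha> z) has_derivative
     (\<lambda>h. - 2 * \<alpha> * (- 2 * \<alpha> * gaussian_barrier \<alpha> z x * ((x - z) \<bullet> h) * ((x - z) \<bullet> b)
                   + gaussian_barrier \<alpha> z x * (h \<bullet> b)))) (at x)"
  unfolding dirderiv_gaussian_barrier
  by (auto intro!: derivative_eq_intros ext gaussian_barrier_has_derivative simp: algebra_simps)

lemma twice_differentiable_on_gaussian_barrier:
  "twice_differentiable_on G (gaussian_barrier \<alpha> z)"
  using gaussian_barrier_has_derivative dirderiv_gaussian_barrier_has_derivative
  unfolding twice_differentiable_on_def differentiable_def by blast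

lemma laplacian_gaussian_barrier:
  fixes x z :: "'a::euclidean_space"
  shows "laplacian (gaussian_barrier \<alpha> z) x =
     gaussian_barrier \<alpha> z x * (4 * \<alpha>\<^sup>2 * ((x - z) \<bullet> (x - z)) - 2 * \<alpha> * DIM('a))"
proof -
  let ?v = "gaussian_barrier \<alpha> z"
  have "dirderiv [b, b] ?v x = ?v x * (4 * \<alpha>\<^sup>2 * ((x - z) \<bullet> b)\<^sup>2 - 2 * \<alpha>)" if "b \<in> Basis" for b
  proof -
    have "dirderiv [b, b] ?v x =
        - 2 * \<alpha> * (- 2 * \<alpha> * ?v x * ((x - z) \<bullet> b) * ((x - z) \<bullet> b) + ?v x * (b \<bullet> b))"
      by (subst dirderiv.simps, subst frechet_derivative_at[OF dirderiv_gaussian_barrier_has_derivative,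
            symmetric]) simp
    then show ?thesis using that by (simp add: power2_eq_square algebra_simps)
  qed
  then have "laplacian ?v x = (\<Sum>b\<in>Basis. ?v x * (4 * \<alpha>\<^sup>2 * ((x - z) \<bullet> b)\<^sup>2 - 2 * \<alpha>))"
    unfolding laplacian_def by (rule sum.cong[OF refl])
  also have "\<dots> = ?v x * (4 * \<alpha>\<^sup>2 * (\<Sum>b\<in>Basis. ((x - z) \<bullet> b)\<^sup>2) - 2 * \<alpha> * DIM('a))"
    by (simp add: sum_distrib_left sum_subtractf algebra_simps)
  also have "(\<Sum>b\<in>Basis. ((x - z) \<bullet> b)\<^sup>2) = (x - z) \<bullet> (x - z)"
    by (simp add: euclidean_inner[of "x - z" "x - z"] power2_eq_square)
  finally show ?thesis .
qed

lemma laplacian_gaussian_barrier_pos: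
  fixes x z :: "'a::euclidean_space"
  assumes "0 < \<alpha>" "real DIM('a) < 2 * \<alpha> * ((x - z) \<bullet> (x - z))"
  shows "0 < laplacian (gaussian_barrier \<alpha> z) x"
proof -
  have "4 * \<alpha>\<^sup>2 * ((x - z) \<bullet> (x - z)) - 2 * \<alpha> * DIM('a) = 2 * \<alpha> * (2 * \<alpha> * ((x - z) \<bullet> (x - z)) - DIM('a))"
    by (simp add: algebra_simps power2_eq_square)
  also have "\<dots> > 0" using assms by simp
  finally show ?thesis
    by (simp add: laplacian_gaussian_barrier gaussian_barrier_pos)
qed

lemma has_derivative_nonpos_at_ray_max:
  fixes f :: "'a::real_normed_vector \<Rightarrow> real"
  assumes f: "(f has_derivative D) (at y within T)" and \<delta>: "0 < \<delta>"
    and ray: "\<And>t. 0 < t \<Longrightarrow> t \<le> \<delta> \<Longrightarrow> y + t *\<^sub>R w \<in> T"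
    and max: "\<And>t. 0 < t \<Longrightarrow> t \<le> \<delta> \<Longrightarrow> f (y + t *\<^sub>R w) \<le> f y"
  shows "D w \<le> 0"
proof -
  have line: "((\<lambda>t. y + t *\<^sub>R w) has_derivative (\<lambda>t. t *\<^sub>R w)) (at 0 within {0<..\<delta>})"
    by (auto intro!: derivative_eq_intros)
  have "(\<lambda>t. y + t *\<^sub>R w) ` {0<..\<delta>} \<subseteq> T" using ray by auto
  then have "(f has_derivative D) (at ((\<lambda>t. y + t *\<^sub>R w) 0) within (\<lambda>t. y + t *\<^sub>R w) ` {0<..\<delta>})"
    using has_derivative_subset[OF f] by simp
  from diff_chain_within[OF line this]
  have "((\<lambda>t. f (y + t *\<^sub>R w)) has_derivative (\<lambda>t. D (t *\<^sub>R w))) (at 0 within {0<..\<delta>})"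
    by (simp add: o_def)
  moreover have "(\<lambda>t. D (t *\<^sub>R w)) = (\<lambda>t. D w * t)"
    using linear_scale[OF has_derivative_linear[OF f]] by (auto simp: fun_eq_iff)
  ultimately have "((\<lambda>t. f (y + t *\<^sub>R w)) has_real_derivative D w) (at 0 within {0<..\<delta>})"
    unfolding has_field_derivative_def by simp
  then have "((\<lambda>t. (f (y + t *\<^sub>R w) - f (y + 0 *\<^sub>R w)) / (t - 0)) \<longlongrightarrow> D w) (at 0 within {0<..\<delta>})"
    unfolding has_field_derivative_iff .
  then show ?thesis
  proof (rule tendsto_upperbound)
    show "\<forall>\<^sub>F t in at 0 within {0<..\<delta>}. (f (y + t *\<^sub>R w) - f (y + 0 *\<^sub>R w)) / (t - 0) \<le> 0"
      unfolding eventually_at_filter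
      by (intro always_eventually allI impI) (use max in \<open>auto simp: divide_nonpos_pos\<close>)
    show "\<not> trivial_limit (at 0 within {0<..\<delta>})"
      unfolding trivial_limit_within using \<delta> by simp
  qed
qed

lemma compact_upper_bound_margin:
  fixes u :: "'a::topological_space \<Rightarrow> real"
  assumes "compact K" "continuous_on K u" "\<forall>x\<in>K. u x < c"
  shows "\<exists>\<delta>>0. \<forall>x\<in>K. u x \<le> c - \<delta>"
proof (cases "K = {}")
  case False
  then obtain x where "x \<in> K" "\<forall>y\<in>K. u y \<le> u x"
    using continuous_attains_sup[OF assms(1) _ assms(2)] by blast
  with assms(3) show ?thesis by (intro exI[of _ "c - u x"]) auto
qed (auto intro: exI[of _ 1])

lemma max_principle_strictly_subharmonic:
  fixes W :: "'a::euclidean_space \<Rightarrow> real"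
  assumes K: "compact K" and A: "open A" "A \<subseteq> K"
    and cont: "continuous_on K W" and tw: "twice_differentiable_on A W"
    and lap: "\<forall>x\<in>A. 0 < laplacian W x"
    and bound: "\<forall>x\<in>K - A. W x \<le> c"
  shows "\<forall>x\<in>K. W x \<le> c"
proof (cases "K = {}")
  case False
  then obtain q where q: "q \<in> K" "\<forall>x\<in>K. W x \<le> W q"
    using continuous_attains_sup[OF K _ cont] by blast
  have "q \<notin> A"
  proof
    assume "q \<in> A"
    then have "laplacian W q \<le> 0"
      using q A by (intro laplacian_nonpos_at_max[OF A(1) _ tw]) auto
    with lap \<open>q \<in> A\<close> show False by force
  qed
  with q bound have "W q \<le> c" by blast
  with q(2) show ?thesis by force
qed simp

lemma laplacian_add_gaussian_barrier_pos:
  fixes u :: "'a::euclidean_space \<Rightarrow> real"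
  assumes G: "open G" "x \<in> G" and tw: "twice_differentiable_on G u" and lap: "0 \<le> laplacian u x"
    and \<alpha>: "0 < \<alpha>" and \<epsilon>: "0 < \<epsilon>" and x: "real DIM('a) < 2 * \<alpha> * ((x - z) \<bullet> (x - z))"
  shows "0 < laplacian (\<lambda>x. u x + \<epsilon> * gaussian_barrier \<alpha> z x) x"
proof -
  have "laplacian (\<lambda>x. u x + \<epsilon> * gaussian_barrier \<alpha> z x) x
      = laplacian u x + \<epsilon> * laplacian (gaussian_barrier \<alpha> z) x"
    using laplacian_lincomb[OF G tw twice_differentiable_on_gaussian_barrier, of 1 \<epsilon>] by simp
  moreover have "0 < laplacian (gaussian_barrier \<alpha> z) x" by (rule laplacian_gaussian_barrier_pos[OF \<alpha> x])
  then have "0 < \<epsilon> * laplacian (gaussian_barrier \<alpha> z) x" using \<epsilon> by simp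
  ultimately show ?thesis using lap by linarith
qed

lemma hopf_barrier_comparison:
  fixes u :: "'a::euclidean_space \<Rightarrow> real"
  assumes R: "0 < R" and y: "dist z y = R"
    and cont: "continuous_on (cball z R) u"
    and le: "\<forall>x\<in>cball z R. u x \<le> u y"
    and tw: "twice_differentiable_on (ball z R) u"
    and lap: "\<forall>x\<in>ball z R. 0 \<le> laplacian u x"
    and \<alpha>: "0 < \<alpha>" "real DIM('a) \<le> 2 * \<alpha> * (R / 2)\<^sup>2"
    and \<epsilon>: "0 < \<epsilon>" "\<forall>x\<in>sphere z (R / 2). u x \<le> u y - \<epsilon>"
  shows "\<forall>x\<in>cball z R - ball z (R / 2).
           u x + \<epsilon> * gaussian_barrier \<alpha> z x \<le> u y + \<epsilon> * gaussian_barrier \<alpha> z y"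
proof (rule max_principle_strictly_subharmonic)
  define v where "v = gaussian_barrier \<alpha> z"
  define A where "A = ball z R - cball z (R / 2)"
  show "compact (cball z R - ball z (R / 2))" by (intro compact_diff) auto
  show "open A" "A \<subseteq> cball z R - ball z (R / 2)" unfolding A_def by auto
  show "continuous_on (cball z R - ball z (R / 2)) (\<lambda>x. u x + \<epsilon> * v x)"
    unfolding v_def gaussian_barrier_def by (intro continuous_intros continuous_on_subset[OF cont]) auto
  have "twice_differentiable_on (ball z R) (\<lambda>x. u x + \<epsilon> * v x)"
    using twice_differentiable_on_lincomb[OF open_ball tw twice_differentiable_on_gaussian_barrier, of 1 \<epsilon>]
    unfolding v_def by simp
  then show "twice_differentiable_on A (\<lambda>x. u x + \<epsilon> * v x)"
    by (rule twice_differentiable_on_subset) (auto simp: A_def)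
  show "\<forall>x\<in>A. 0 < laplacian (\<lambda>x. u x + \<epsilon> * v x) x"
  proof
    fix x assume x: "x \<in> A"
    then have "(R / 2)\<^sup>2 < (dist z x)\<^sup>2"
      using R unfolding A_def by (intro power_strict_mono) auto
    then have "2 * \<alpha> * (R / 2)\<^sup>2 < 2 * \<alpha> * (dist z x)\<^sup>2"
      using \<alpha>(1) by (intro mult_strict_left_mono) auto
    then have "real DIM('a) < 2 * \<alpha> * ((x - z) \<bullet> (x - z))"
      using \<alpha>(2) by (simp add: inner_diff_eq_dist_sq)
    then show "0 < laplacian (\<lambda>x. u x + \<epsilon> * v x) x"
      using laplacian_add_gaussian_barrier_pos[OF open_ball _ tw _ \<alpha>(1) \<epsilon>(1)] lap x
      unfolding v_def A_def by simp
  qed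
  show "\<forall>x\<in>(cball z R - ball z (R / 2)) - A. u x + \<epsilon> * v x \<le> u y + \<epsilon> * v y"
  proof
    fix x assume x: "x \<in> (cball z R - ball z (R / 2)) - A"
    then have "R / 2 \<le> dist z x" "dist z x \<le> R" "\<not> (R / 2 < dist z x \<and> dist z x < R)"
      unfolding A_def by auto
    then consider "dist z x = R" | "dist z x = R / 2" by linarith
    then show "u x + \<epsilon> * v x \<le> u y + \<epsilon> * v y"
    proof cases
      case 1
      then show ?thesis using le x y unfolding v_def gaussian_barrier_dist by auto
    next
      case 2
      then have "u x \<le> u y - \<epsilon>" using \<epsilon>(2) by simp
      moreover have "\<epsilon> * v x \<le> \<epsilon>" using gaussian_barrier_le_one[of \<alpha>] \<alpha> \<epsilon> unfolding v_def by simp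
      moreover have "0 < \<epsilon> * v y" using \<epsilon> gaussian_barrier_pos unfolding v_def by (intro mult_pos_pos) auto
      ultimately show ?thesis by linarith
    qed
  qed
qed

lemma hopf_lemma_ball:
  fixes u :: "'a::euclidean_space \<Rightarrow> real"
  assumes R: "0 < R" and y: "dist z y = R"
    and cont: "continuous_on (cball z R) u"
    and le: "\<forall>x\<in>cball z R. u x \<le> u y"
    and lt: "\<forall>x\<in>ball z R. u x < u y"
    and tw: "twice_differentiable_on (ball z R) u"
    and lap: "\<forall>x\<in>ball z R. 0 \<le> laplacian u x"
    and D: "(u has_derivative D) (at y within cball z R)"
  shows "0 < D (y - z)"
proof -
  have sphere: "sphere z (R / 2) \<subseteq> ball z R" using R by auto
  have "continuous_on (sphere z (R / 2)) u"
    by (rule continuous_on_subset[OF cont]) (use sphere in auto)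
  moreover have "\<forall>x\<in>sphere z (R / 2). u x < u y" using lt sphere by blast
  ultimately obtain \<epsilon> where \<epsilon>: "0 < \<epsilon>" "\<forall>x\<in>sphere z (R / 2). u x \<le> u y - \<epsilon>"
    using compact_upper_bound_margin[OF compact_sphere] by blast
  define \<alpha> where "\<alpha> = 2 * DIM('a) / R\<^sup>2"
  have \<alpha>: "0 < \<alpha>" "2 * \<alpha> * (R / 2)\<^sup>2 = DIM('a)"
    using R unfolding \<alpha>_def by (auto simp: power_divide)
  define W where "W x = u x + \<epsilon> * gaussian_barrier \<alpha> z x" for x
  have max: "\<forall>x\<in>cball z R - ball z (R / 2). W x \<le> W y"
    unfolding W_def by (rule hopf_barrier_comparison[OF R y cont le tw lap \<alpha>(1) _ \<epsilon>]) (simp add: \<alpha>(2))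
  have W: "(W has_derivative (\<lambda>h. D h + \<epsilon> * (- 2 * \<alpha> * gaussian_barrier \<alpha> z y * ((y - z) \<bullet> h))))
      (at y within cball z R)"
    unfolding W_def by (intro derivative_intros D has_derivative_at_withinI[OF gaussian_barrier_has_derivative])
  have "D (z - y) + \<epsilon> * (- 2 * \<alpha> * gaussian_barrier \<alpha> z y * ((y - z) \<bullet> (z - y))) \<le> 0"
  proof (rule has_derivative_nonpos_at_ray_max[OF W, where \<delta> = "1 / 2"])
    fix t :: real assume t: "0 < t" "t \<le> 1 / 2"
    have "z - (y + t *\<^sub>R (z - y)) = (1 - t) *\<^sub>R (z - y)" by (simp add: algebra_simps)
    then have "dist z (y + t *\<^sub>R (z - y)) = (1 - t) * R"
      using t y by (simp add: dist_norm)
    moreover have "t * R \<le> R / 2" using mult_right_mono[of t "1 / 2" R] t R by simp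
    moreover have "0 \<le> t * R" using t R by simp
    ultimately have "y + t *\<^sub>R (z - y) \<in> cball z R - ball z (R / 2)" by (simp add: left_diff_distrib)
    then show "y + t *\<^sub>R (z - y) \<in> cball z R" "W (y + t *\<^sub>R (z - y)) \<le> W y" using max by auto
  qed simp
  moreover have "(y - z) \<bullet> (z - y) = - ((y - z) \<bullet> (y - z))"
    by (metis inner_minus_right minus_diff_eq)
  then have "\<epsilon> * (- 2 * \<alpha> * gaussian_barrier \<alpha> z y * ((y - z) \<bullet> (z - y)))
      = \<epsilon> * (2 * \<alpha> * gaussian_barrier \<alpha> z y * R\<^sup>2)"
    using y by (simp add: inner_diff_eq_dist_sq)
  moreover have "0 < \<epsilon> * (2 * \<alpha> * gaussian_barrier \<alpha> z y * R\<^sup>2)"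
    using \<epsilon> \<alpha> R gaussian_barrier_pos by (intro mult_pos_pos) auto
  moreover have "D (z - y) = - D (y - z)"
    using linear_neg[OF has_derivative_linear[OF D], of "y - z"] by simp
  ultimately show ?thesis by linarith
qed

section \<open>The strong maximum principle\<close>

lemma subharmonic_max_not_on_sphere:
  fixes u :: "'a::euclidean_space \<Rightarrow> real"
  assumes G: "open G" "cball p \<rho> \<subseteq> G" and \<rho>: "0 < \<rho>"
    and tw: "twice_differentiable_on G u" and cont: "continuous_on G u"
    and lap: "\<forall>x\<in>G. 0 \<le> laplacian u x"
    and max: "\<forall>x\<in>G. u x \<le> u y" and y: "dist p y = \<rho>"
    and lt: "\<forall>x\<in>ball p \<rho>. u x < u y"
  shows False
proof -
  have yG: "y \<in> G" using y G by auto
  then have D: "(u has_derivative frechet_derivative u (at y)) (at y)"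
    using tw unfolding twice_differentiable_on_def frechet_derivative_works by blast
  have "0 < frechet_derivative u (at y) (y - p)"
  proof (rule hopf_lemma_ball[OF \<rho> y])
    show "continuous_on (cball p \<rho>) u" by (rule continuous_on_subset[OF cont G(2)])
    show "twice_differentiable_on (ball p \<rho>) u"
      by (rule twice_differentiable_on_subset[OF tw]) (use G in auto)
    show "\<forall>x\<in>ball p \<rho>. 0 \<le> laplacian u x" using lap G(2) ball_subset_cball by blast
  qed (use G lt max D has_derivative_at_withinI in auto)
  moreover have "frechet_derivative u (at y) = (\<lambda>v. 0)"
    by (rule differential_zero_maxmin[OF yG G(1) D]) (use max in auto)
  ultimately show False by simp
qed

lemma subharmonic_max_on_half_ball:
  fixes u :: "'a::euclidean_space \<Rightarrow> real"
  assumes G: "open G" and tw: "twice_differentiable_on G u" and cont: "continuous_on G u"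
    and lap: "\<forall>x\<in>G. 0 \<le> laplacian u x" and le: "\<forall>x\<in>G. u x \<le> M"
    and r: "cball x r \<subseteq> G" and x: "u x = M" and p: "p \<in> ball x (r / 2)"
  shows "u p = M"
proof (rule ccontr)
  assume "u p \<noteq> M"
  have "0 < r" using p zero_le_dist[of x p] unfolding mem_ball by linarith
  have "p \<in> G" using p r \<open>0 < r\<close> by (auto simp: subset_iff)
  with \<open>u p \<noteq> M\<close> have up: "u p < M" using le by force
  txt \<open>Touch the level set \<open>u = M\<close> from inside with the largest ball around \<open>p\<close> avoiding it.\<close>
  define K where "K = {y \<in> cball x r. u y = M}"
  have "closed K"
    unfolding K_def using continuous_on_subset[OF cont r]
    by (intro continuous_closed_preimage_constant) auto
  moreover have "x \<in> K" using x \<open>0 < r\<close> unfolding K_def by auto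
  ultimately obtain y where y: "y \<in> K" "\<And>w. w \<in> K \<Longrightarrow> dist p y \<le> dist p w"
    using distance_attains_inf by blast
  define \<rho> where "\<rho> = dist p y"
  have "0 < \<rho>" using y(1) up unfolding K_def \<rho>_def by auto
  have "\<rho> < r / 2" using y(2)[OF \<open>x \<in> K\<close>] p unfolding \<rho>_def by (simp add: dist_commute)
  have ball: "cball p \<rho> \<subseteq> ball x r"
  proof
    fix q assume "q \<in> cball p \<rho>"
    then show "q \<in> ball x r" using dist_triangle[of x q p] p \<open>\<rho> < r / 2\<close> by simp
  qed
  show False
  proof (rule subharmonic_max_not_on_sphere[OF G _ \<open>0 < \<rho>\<close> tw cont lap])
    show "cball p \<rho> \<subseteq> G" using ball r ball_subset_cball by blast
    show "\<forall>w\<in>G. u w \<le> u y" using le y(1) unfolding K_def by auto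
    show "dist p y = \<rho>" unfolding \<rho>_def ..
    show "\<forall>w\<in>ball p \<rho>. u w < u y"
    proof
      fix w assume w: "w \<in> ball p \<rho>"
      then have "w \<notin> K" using y(2)[of w] unfolding \<rho>_def by force
      moreover have "w \<in> cball x r" using w ball ball_subset_cball by blast
      ultimately show "u w < u y" using le r y(1) unfolding K_def by force
    qed
  qed
qed

lemma subharmonic_max_set_open:
  fixes u :: "'a::euclidean_space \<Rightarrow> real"
  assumes G: "open G" and tw: "twice_differentiable_on G u" and cont: "continuous_on G u"
    and lap: "\<forall>x\<in>G. 0 \<le> laplacian u x" and le: "\<forall>x\<in>G. u x \<le> M"
  shows "open {x\<in>G. u x = M}"
  unfolding open_contains_ball
proof
  fix x assume "x \<in> {x\<in>G. u x = M}"
  then obtain r where r: "0 < r" "cball x r \<subseteq> G" "u x = M"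
    using G open_contains_cball by blast
  then have "ball x (r / 2) \<subseteq> {x\<in>G. u x = M}"
    using subharmonic_max_on_half_ball[OF G tw cont lap le r(2,3)] by (auto simp: subset_iff)
  then show "\<exists>e>0. ball x e \<subseteq> {x\<in>G. u x = M}" using r by (intro exI[of _ "r / 2"]) auto
qed

lemma strong_maximum_principle:
  fixes u :: "'a::euclidean_space \<Rightarrow> real"
  assumes G: "open G" "connected G" and tw: "twice_differentiable_on G u"
    and cont: "continuous_on G u"
    and lap: "\<forall>x\<in>G. 0 \<le> laplacian u x" and le: "\<forall>x\<in>G. u x \<le> M"
    and x1: "x1 \<in> G" "u x1 = M"
  shows "\<forall>x\<in>G. u x = M"
proof -
  have "open {x\<in>G. u x < M}" using continuous_open_preimage[OF cont G(1) open_lessThan]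
    by (simp add: vimage_def Int_def conj_commute)
  then have "{x\<in>G. u x = M} \<inter> G = {} \<or> {x\<in>G. u x < M} \<inter> G = {}"
    using le by (intro connectedD[OF G(2) subharmonic_max_set_open[OF G(1) tw cont lap le]]) auto
  then show ?thesis using x1 le by force
qed

section \<open>The interior sphere condition\<close>

lemma inner_grad:
  assumes "linear (frechet_derivative \<phi> (at x))"
  shows "grad \<phi> x \<bullet> h = frechet_derivative \<phi> (at x) h"
proof -
  have "grad \<phi> x \<bullet> h = (\<Sum>b\<in>Basis. frechet_derivative \<phi> (at x) b * (b \<bullet> h))"
    by (simp add: grad_def inner_sum_left)
  also have "\<dots> = (\<Sum>b\<in>Basis. (h \<bullet> b) * frechet_derivative \<phi> (at x) b)"
    by (simp add: inner_commute mult.commute)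
  also have "\<dots> = frechet_derivative \<phi> (at x) (\<Sum>b\<in>Basis. (h \<bullet> b) *\<^sub>R b)"
    by (simp add: linear_sum[OF assms] linear_scale[OF assms] o_def)
  finally show ?thesis by (simp add: euclidean_representation)
qed

lemma smooth_on_dirderiv_differentiable:
  "smooth_on U \<phi> \<Longrightarrow> set bs \<subseteq> Basis \<Longrightarrow> x \<in> U \<Longrightarrow> dirderiv bs \<phi> differentiable (at x)"
  unfolding smooth_on_def by blast

lemma dirderiv_lipschitz:
  fixes \<phi> :: "'a::euclidean_space \<Rightarrow> real"
  assumes S: "convex S" and d: "\<forall>w\<in>S. dirderiv [b] \<phi> differentiable (at w)"
    and M: "\<forall>w\<in>S. (\<Sum>c\<in>Basis. \<bar>dirderiv [c, b] \<phi> w\<bar>) \<le> M"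
    and xy: "x \<in> S" "y \<in> S"
  shows "\<bar>dirderiv [b] \<phi> x - dirderiv [b] \<phi> y\<bar> \<le> M * norm (x - y)"
proof -
  have "norm (dirderiv [b] \<phi> x - dirderiv [b] \<phi> y) \<le> M * norm (x - y)"
  proof (rule differentiable_bound[OF S _ _ xy])
    fix w assume w: "w \<in> S"
    then have D: "(dirderiv [b] \<phi> has_derivative frechet_derivative (dirderiv [b] \<phi>) (at w)) (at w)"
      using d frechet_derivative_works by blast
    then show "(dirderiv [b] \<phi> has_derivative frechet_derivative (dirderiv [b] \<phi>) (at w)) (at w within S)"
      by (rule has_derivative_at_withinI)
    have "onorm (frechet_derivative (dirderiv [b] \<phi>) (at w))
        \<le> (\<Sum>c\<in>Basis. norm (frechet_derivative (dirderiv [b] \<phi>) (at w) c))"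
      by (rule onorm_componentwise[OF has_derivative_bounded_linear[OF D]])
    also have "\<dots> \<le> M" using M w by simp
    finally show "onorm (frechet_derivative (dirderiv [b] \<phi>) (at w)) \<le> M" .
  qed
  then show ?thesis by simp
qed

lemma smooth_on_second_partials_bounded:
  fixes \<phi> :: "'a::euclidean_space \<Rightarrow> real"
  assumes sm: "smooth_on U \<phi>" and K: "compact K" "K \<subseteq> U"
  shows "\<exists>M\<ge>0. \<forall>w\<in>K. \<forall>b\<in>Basis. (\<Sum>c\<in>Basis. \<bar>dirderiv [c, b] \<phi> w\<bar>) \<le> M"
proof -
  define F where "F w = (\<Sum>b\<in>Basis. \<Sum>c\<in>Basis. \<bar>dirderiv [c, b] \<phi> w\<bar>)" for w
  have "continuous_on K (dirderiv [c, b] \<phi>)" if "b \<in> Basis" "c \<in> Basis" for b c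
    using smooth_on_dirderiv_differentiable[OF sm, of "[c, b]"] K(2) that
    by (intro continuous_at_imp_continuous_on ballI differentiable_imp_continuous_within) auto
  then have "continuous_on K F" unfolding F_def by (intro continuous_intros)
  then have "bounded (F ` K)" by (intro compact_imp_bounded compact_continuous_image K(1))
  then obtain B where B: "\<forall>w\<in>K. \<bar>F w\<bar> \<le> B" unfolding bounded_real by blast
  have "(\<Sum>c\<in>Basis. \<bar>dirderiv [c, b] \<phi> w\<bar>) \<le> \<bar>B\<bar>" if "w \<in> K" "b \<in> Basis" for w b
  proof -
    have "(\<Sum>c\<in>Basis. \<bar>dirderiv [c, b] \<phi> w\<bar>) \<le> F w"
      unfolding F_def using that(2) by (intro member_le_sum sum_nonneg) auto
    then show ?thesis using B that(1) by fastforce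
  qed
  then show ?thesis by (intro exI[of _ "\<bar>B\<bar>"]) auto
qed

lemma frechet_derivative_lipschitz_near:
  fixes \<phi> :: "'a::euclidean_space \<Rightarrow> real"
  assumes sm: "smooth_on U \<phi>" and U: "open U" "x0 \<in> U"
  shows "\<exists>\<rho>>0. \<exists>L\<ge>0. cball x0 \<rho> \<subseteq> U \<and> (\<forall>x\<in>cball x0 \<rho>.
           onorm (frechet_derivative \<phi> (at x) - frechet_derivative \<phi> (at x0)) \<le> L * norm (x - x0))"
proof -
  obtain \<rho> where \<rho>: "0 < \<rho>" "cball x0 \<rho> \<subseteq> U" using U open_contains_cball by blast
  obtain M where M: "0 \<le> M" "\<forall>w\<in>cball x0 \<rho>. \<forall>b\<in>Basis. (\<Sum>c\<in>Basis. \<bar>dirderiv [c, b] \<phi> w\<bar>) \<le> M"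
    using smooth_on_second_partials_bounded[OF sm compact_cball \<rho>(2)] by blast
  have D: "bounded_linear (frechet_derivative \<phi> (at y))" if "y \<in> U" for y
    using smooth_on_dirderiv_differentiable[OF sm, of "[]" y] that
    by (simp add: frechet_derivative_works has_derivative_bounded_linear)
  have "onorm (frechet_derivative \<phi> (at x) - frechet_derivative \<phi> (at x0))
          \<le> (DIM('a) * M) * norm (x - x0)" if x: "x \<in> cball x0 \<rho>" for x
  proof -
    have "onorm (frechet_derivative \<phi> (at x) - frechet_derivative \<phi> (at x0))
        \<le> (\<Sum>b\<in>Basis. norm ((frechet_derivative \<phi> (at x) - frechet_derivative \<phi> (at x0)) b))"
      using D[of x] D[OF U(2)] x \<rho> unfolding fun_diff_def
      by (intro onorm_componentwise bounded_linear_sub) auto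
    also have "\<dots> \<le> (\<Sum>b\<in>(Basis::'a set). M * norm (x - x0))"
    proof (rule sum_mono)
      fix b :: 'a assume b: "b \<in> Basis"
      have "\<forall>w\<in>cball x0 \<rho>. dirderiv [b] \<phi> differentiable (at w)"
        using smooth_on_dirderiv_differentiable[OF sm, of "[b]"] \<rho> b by auto
      from dirderiv_lipschitz[OF convex_cball this _ x, of M] M(2) b \<rho>
      show "norm ((frechet_derivative \<phi> (at x) - frechet_derivative \<phi> (at x0)) b) \<le> M * norm (x - x0)"
        by simp
    qed
    finally show ?thesis by simp
  qed
  then show ?thesis
    using \<rho> M(1) by (intro exI[of _ \<rho>] conjI exI[of _ "real DIM('a) * M"]) auto
qed

lemma linearization_error_le_quadratic:
  fixes \<phi> :: "'a::real_normed_vector \<Rightarrow> real"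
  assumes D: "\<forall>x\<in>cball x0 \<rho>. (\<phi> has_derivative D x) (at x)"
    and lip: "\<forall>x\<in>cball x0 \<rho>. onorm (D x - D x0) \<le> L * norm (x - x0)"
    and L: "0 \<le> L" and y: "y \<in> cball x0 \<rho>"
  shows "\<bar>\<phi> y - \<phi> x0 - D x0 (y - x0)\<bar> \<le> L * (norm (y - x0))\<^sup>2"
proof -
  define r where "r = norm (y - x0)"
  have r: "cball x0 r \<subseteq> cball x0 \<rho>" using y unfolding r_def by (auto simp: dist_norm norm_minus_commute)
  have "norm (\<phi> y - \<phi> x0 - D x0 (y - x0)) \<le> norm (y - x0) * (L * r)"
  proof (rule differentiable_bound_linearization[where S = "cball x0 r"])
    fix t :: real assume "t \<in> {0..1}"
    then show "x0 + t *\<^sub>R (y - x0) \<in> cball x0 r"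
      unfolding r_def by (auto simp: dist_norm mult_left_le_one_le)
  next
    fix x assume "x \<in> cball x0 r"
    then show "(\<phi> has_derivative D x) (at x within cball x0 r)"
      using D r has_derivative_at_withinI by blast
    have "onorm (D x - D x0) \<le> L * norm (x - x0)" using lip r \<open>x \<in> cball x0 r\<close> by blast
    also have "\<dots> \<le> L * r"
      using \<open>x \<in> cball x0 r\<close> L by (intro mult_left_mono) (auto simp: dist_norm norm_minus_commute)
    finally show "onorm (D x - D x0) \<le> L * r" .
  qed (simp add: r_def)
  then show ?thesis unfolding r_def by (simp add: power2_eq_square mult_ac)
qed

lemma ball_in_sublevel_of_tangent_bound:
  fixes \<phi> :: "'a::real_inner \<Rightarrow> real"
  assumes n: "n \<noteq> 0"
    and bound: "\<forall>y\<in>cball x0 \<rho>. \<phi> y \<le> n \<bullet> (y - x0) + L * (norm (y - x0))\<^sup>2"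
    and R: "0 < R" "2 * R \<le> \<rho>" "2 * R * L \<le> norm n"
  shows "ball (x0 - R *\<^sub>R (n /\<^sub>R norm n)) R \<subseteq> {y \<in> cball x0 \<rho>. \<phi> y < 0}"
proof
  define g where "g = norm n"
  define \<nu> where "\<nu> = n /\<^sub>R g"
  have g: "0 < g" and \<nu>: "norm \<nu> = 1" and n_eq: "n = g *\<^sub>R \<nu>"
    using n unfolding g_def \<nu>_def by auto
  fix y assume "y \<in> ball (x0 - R *\<^sub>R (n /\<^sub>R norm n)) R"
  then have "y \<in> ball (x0 - R *\<^sub>R \<nu>) R" unfolding \<nu>_def g_def .
  define h where "h = y - x0"
  have hR: "norm (h + R *\<^sub>R \<nu>) < R"
    using \<open>y \<in> ball (x0 - R *\<^sub>R \<nu>) R\<close> unfolding h_def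
    by (simp add: dist_norm norm_minus_commute algebra_simps)
  have "norm h \<le> norm (h + R *\<^sub>R \<nu>) + norm (R *\<^sub>R \<nu>)"
    by (metis add_diff_cancel norm_triangle_ineq4)
  then have "y \<in> cball x0 \<rho>"
    using hR \<nu> R unfolding h_def by (simp add: dist_norm norm_minus_commute)
  have "(norm (h + R *\<^sub>R \<nu>))\<^sup>2 = h \<bullet> h + 2 * R * (\<nu> \<bullet> h) + R\<^sup>2 * (\<nu> \<bullet> \<nu>)"
    unfolding power2_norm_eq_inner
    by (simp add: inner_add_left inner_add_right inner_commute[of h \<nu>] power2_eq_square algebra_simps)
  also have "\<dots> = (norm h)\<^sup>2 + 2 * R * (\<nu> \<bullet> h) + R\<^sup>2"
    using \<nu> by (simp add: power2_norm_eq_inner norm_eq_1)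
  moreover have "(norm (h + R *\<^sub>R \<nu>))\<^sup>2 < R\<^sup>2"
    using hR by (simp add: power_strict_mono)
  ultimately have "2 * R * (\<nu> \<bullet> h) < - (norm h)\<^sup>2" by simp
  then have "g * (2 * R * (\<nu> \<bullet> h)) < g * - (norm h)\<^sup>2"
    using g by (rule mult_strict_left_mono)
  moreover have "g * - (norm h)\<^sup>2 \<le> 2 * R * L * - (norm h)\<^sup>2"
    using R(3) unfolding g_def by (intro mult_right_mono_neg) auto
  ultimately have "2 * R * (g * (\<nu> \<bullet> h) + L * (norm h)\<^sup>2) < 0"
    by (simp add: algebra_simps)
  then have "g * (\<nu> \<bullet> h) + L * (norm h)\<^sup>2 < 0"
    using R(1) by (simp add: mult_less_0_iff)
  then show "y \<in> {y \<in> cball x0 \<rho>. \<phi> y < 0}"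
    using bound \<open>y \<in> cball x0 \<rho>\<close> unfolding h_def n_eq by fastforce
qed

lemma local_defining_fun_nonpos:
  assumes ldf: "local_defining_fun \<Omega> x0 U \<phi>" and x0: "x0 \<in> closure \<Omega>"
  shows "\<phi> x0 \<le> 0"
proof (rule ccontr)
  assume "\<not> \<phi> x0 \<le> 0"
  have U: "open U" "x0 \<in> U" and sm: "smooth_on U \<phi>" and \<Omega>U: "\<Omega> \<inter> U = {y\<in>U. \<phi> y < 0}"
    using ldf unfolding local_defining_fun_def by auto
  have "continuous_on U \<phi>"
    using smooth_on_dirderiv_differentiable[OF sm, of "[]"]
    by (intro continuous_at_imp_continuous_on ballI differentiable_imp_continuous_within) auto
  then have "open (U \<inter> \<phi> -` {0<..})" using U(1) by (rule continuous_open_preimage) auto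
  moreover have "(U \<inter> \<phi> -` {0<..}) \<inter> \<Omega> = {}"
  proof (intro equalityI subsetI)
    fix x assume "x \<in> (U \<inter> \<phi> -` {0<..}) \<inter> \<Omega>"
    then have "x \<in> \<Omega> \<inter> U" "0 < \<phi> x" by auto
    then show "x \<in> {}" using \<Omega>U by auto
  qed simp
  ultimately have "(U \<inter> \<phi> -` {0<..}) \<inter> closure \<Omega> = {}" by (simp add: open_Int_closure_eq_empty)
  then show False using x0 U \<open>\<not> \<phi> x0 \<le> 0\<close> by auto
qed

lemma local_defining_fun_below_tangent:
  fixes \<Omega> U :: "'a::euclidean_space set"
  assumes ldf: "local_defining_fun \<Omega> x0 U \<phi>" and x0: "x0 \<in> closure \<Omega>"
  shows "\<exists>\<rho>>0. \<exists>L. cball x0 \<rho> \<subseteq> U \<and>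
           (\<forall>y\<in>cball x0 \<rho>. \<phi> y \<le> grad \<phi> x0 \<bullet> (y - x0) + L * (norm (y - x0))\<^sup>2)"
proof -
  have U: "open U" "x0 \<in> U" and sm: "smooth_on U \<phi>"
    using ldf unfolding local_defining_fun_def by auto
  obtain \<rho> L where \<rho>: "0 < \<rho>" "0 \<le> L" "cball x0 \<rho> \<subseteq> U"
    and lip: "\<forall>x\<in>cball x0 \<rho>.
      onorm (frechet_derivative \<phi> (at x) - frechet_derivative \<phi> (at x0)) \<le> L * norm (x - x0)"
    using frechet_derivative_lipschitz_near[OF sm U] by blast
  have D: "(\<phi> has_derivative frechet_derivative \<phi> (at x)) (at x)" if "x \<in> U" for x
    using smooth_on_dirderiv_differentiable[OF sm, of "[]"] that frechet_derivative_works by auto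
  have "\<phi> y \<le> grad \<phi> x0 \<bullet> (y - x0) + L * (norm (y - x0))\<^sup>2" if y: "y \<in> cball x0 \<rho>" for y
  proof -
    have "\<bar>\<phi> y - \<phi> x0 - frechet_derivative \<phi> (at x0) (y - x0)\<bar> \<le> L * (norm (y - x0))\<^sup>2"
      using D \<rho>(3) by (intro linearization_error_le_quadratic[OF _ lip \<rho>(2) y]) auto
    moreover have "frechet_derivative \<phi> (at x0) (y - x0) = grad \<phi> x0 \<bullet> (y - x0)"
      using inner_grad[OF has_derivative_linear[OF D[OF U(2)]]] by simp
    moreover have "\<phi> x0 \<le> 0" by (rule local_defining_fun_nonpos[OF ldf x0])
    ultimately show ?thesis by linarith
  qed
  then show ?thesis using \<rho> by blast
qed

lemma local_defining_fun_interior_ball: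
  fixes \<Omega> U :: "'a::euclidean_space set"
  assumes ldf: "local_defining_fun \<Omega> x0 U \<phi>" and x0: "x0 \<in> closure \<Omega>"
  shows "\<exists>R0>0. \<forall>R. 0 < R \<and> R \<le> R0 \<longrightarrow>
           ball (x0 - R *\<^sub>R (grad \<phi> x0 /\<^sub>R norm (grad \<phi> x0))) R \<subseteq> \<Omega>"
proof -
  have "grad \<phi> x0 \<noteq> 0" and \<Omega>U: "\<Omega> \<inter> U = {y\<in>U. \<phi> y < 0}"
    using ldf unfolding local_defining_fun_def by auto
  obtain \<rho> L where \<rho>: "0 < \<rho>" "cball x0 \<rho> \<subseteq> U"
    and bound: "\<forall>y\<in>cball x0 \<rho>. \<phi> y \<le> grad \<phi> x0 \<bullet> (y - x0) + L * (norm (y - x0))\<^sup>2"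
    using local_defining_fun_below_tangent[OF ldf x0] by blast
  define R0 where "R0 = min (\<rho> / 2) (norm (grad \<phi> x0) / (2 * (\<bar>L\<bar> + 1)))"
  have "ball (x0 - R *\<^sub>R (grad \<phi> x0 /\<^sub>R norm (grad \<phi> x0))) R \<subseteq> \<Omega>" if R: "0 < R" "R \<le> R0" for R
  proof -
    have "2 * R * (\<bar>L\<bar> + 1) \<le> norm (grad \<phi> x0)"
      using R unfolding R0_def by (simp add: field_simps)
    moreover have "2 * R * L \<le> 2 * R * (\<bar>L\<bar> + 1)" using R(1) by (intro mult_left_mono) auto
    ultimately have "2 * R * L \<le> norm (grad \<phi> x0)" by linarith
    then have "ball (x0 - R *\<^sub>R (grad \<phi> x0 /\<^sub>R norm (grad \<phi> x0))) R \<subseteq> {y \<in> cball x0 \<rho>. \<phi> y < 0}"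
      using R unfolding R0_def
      by (intro ball_in_sublevel_of_tangent_bound[OF \<open>grad \<phi> x0 \<noteq> 0\<close> bound]) auto
    then show ?thesis using \<Omega>U \<rho>(2) by blast
  qed
  moreover have "0 < R0" unfolding R0_def using \<rho> \<open>grad \<phi> x0 \<noteq> 0\<close> by auto
  ultimately show ?thesis by blast
qed

lemma outward_normal_eq_grad:
  assumes "smooth_boundary \<Omega>" "x0 \<in> frontier \<Omega>"
  shows "\<exists>U \<phi>. local_defining_fun \<Omega> x0 U \<phi> \<and> outward_normal \<Omega> x0 = grad \<phi> x0 /\<^sub>R norm (grad \<phi> x0)"
proof -
  have "\<exists>n U \<phi>. local_defining_fun \<Omega> x0 U \<phi> \<and> n = grad \<phi> x0 /\<^sub>R norm (grad \<phi> x0)"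
    using assms unfolding smooth_boundary_def by blast
  from someI_ex[OF this] show ?thesis unfolding outward_normal_def by blast
qed

lemma interior_sphere_condition:
  fixes \<Omega> :: "'a::euclidean_space set"
  assumes dom: "smooth_bounded_domain \<Omega>" and x0: "x0 \<in> frontier \<Omega>"
  shows "norm (outward_normal \<Omega> x0) = 1"
    and "\<exists>R0>0. \<forall>R. 0 < R \<and> R \<le> R0 \<longrightarrow> ball (x0 - R *\<^sub>R outward_normal \<Omega> x0) R \<subseteq> \<Omega>"
proof -
  obtain U \<phi> where ldf: "local_defining_fun \<Omega> x0 U \<phi>"
    and \<nu>: "outward_normal \<Omega> x0 = grad \<phi> x0 /\<^sub>R norm (grad \<phi> x0)"
    using outward_normal_eq_grad dom x0 unfolding smooth_bounded_domain_def by blast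
  have "grad \<phi> x0 \<noteq> 0" using ldf unfolding local_defining_fun_def by auto
  then show "norm (outward_normal \<Omega> x0) = 1" unfolding \<nu> by simp
  have "x0 \<in> closure \<Omega>" using x0 unfolding frontier_def by auto
  from local_defining_fun_interior_ball[OF ldf this]
  show "\<exists>R0>0. \<forall>R. 0 < R \<and> R \<le> R0 \<longrightarrow> ball (x0 - R *\<^sub>R outward_normal \<Omega> x0) R \<subseteq> \<Omega>"
    unfolding \<nu> .
qed

section \<open>Maximum principles on smooth bounded domains\<close>

definition normal_derivative_nonpos :: "'a::euclidean_space set \<Rightarrow> ('a \<Rightarrow> real) \<Rightarrow> 'a \<Rightarrow> bool" where
  "normal_derivative_nonpos \<Omega> u x \<longleftrightarrow>
     (\<exists>D. (u has_derivative D) (at x within closure \<Omega>) \<and> D (outward_normal \<Omega> x) \<le> 0)"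

lemma hopf_lemma_boundary:
  fixes u :: "'a::euclidean_space \<Rightarrow> real"
  assumes dom: "smooth_bounded_domain \<Omega>" and x0: "x0 \<in> frontier \<Omega>"
    and cont: "continuous_on (closure \<Omega>) u" and tw: "twice_differentiable_on \<Omega> u"
    and bc: "normal_derivative_nonpos \<Omega> u x0"
    and max: "\<forall>x\<in>closure \<Omega>. u x \<le> u x0"
    and r: "0 < r"
    and lt: "\<forall>x\<in>\<Omega> \<inter> ball x0 r. u x < u x0"
    and lap: "\<forall>x\<in>\<Omega> \<inter> ball x0 r. 0 \<le> laplacian u x"
  shows False
proof -
  obtain D where D: "(u has_derivative D) (at x0 within closure \<Omega>)" "D (outward_normal \<Omega> x0) \<le> 0"
    using bc unfolding normal_derivative_nonpos_def by blast
  define \<nu> where "\<nu> = outward_normal \<Omega> x0"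
  obtain R0 where R0: "0 < R0" "\<forall>R. 0 < R \<and> R \<le> R0 \<longrightarrow> ball (x0 - R *\<^sub>R \<nu>) R \<subseteq> \<Omega>"
    using interior_sphere_condition(2)[OF dom x0] unfolding \<nu>_def by blast
  define R where "R = min R0 (r / 2)"
  have R: "0 < R" "R \<le> R0" "2 * R \<le> r" unfolding R_def using R0 r by auto
  define z where "z = x0 - R *\<^sub>R \<nu>"
  have z: "dist z x0 = R"
    using interior_sphere_condition(1)[OF dom x0] R unfolding z_def \<nu>_def by (simp add: dist_norm)
  have ball: "ball z R \<subseteq> \<Omega> \<inter> ball x0 r"
  proof -
    have "ball z R \<subseteq> ball x0 r"
    proof
      fix w assume "w \<in> ball z R"
      then have "dist x0 w < 2 * R" using dist_triangle[of x0 w z] z by (simp add: dist_commute)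
      then show "w \<in> ball x0 r" using R by simp
    qed
    then show ?thesis using R0(2) R unfolding z_def by auto
  qed
  then have cball: "cball z R \<subseteq> closure \<Omega>"
    using closure_mono[of "ball z R" \<Omega>] R by simp
  have "0 < D (x0 - z)"
  proof (rule hopf_lemma_ball[OF R(1) z])
    show "continuous_on (cball z R) u" by (rule continuous_on_subset[OF cont cball])
    show "twice_differentiable_on (ball z R) u" using twice_differentiable_on_subset[OF tw] ball by auto
    show "(u has_derivative D) (at x0 within cball z R)" by (rule has_derivative_subset[OF D(1) cball])
  qed (use max cball lt lap ball in auto)
  moreover have "D (x0 - z) = R * D \<nu>"
    unfolding z_def using linear_scale[OF has_derivative_linear[OF D(1)]] by simp
  moreover have "R * D \<nu> \<le> 0" using R D(2) unfolding \<nu>_def by (simp add: mult_nonneg_nonpos)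
  ultimately show False by simp
qed

lemma frontier_if_not_in_open:
  "open \<Omega> \<Longrightarrow> x \<in> closure \<Omega> \<Longrightarrow> x \<notin> \<Omega> \<Longrightarrow> x \<in> frontier \<Omega>"
  by (simp add: frontier_def interior_open)

lemma subharmonic_neumann_const:
  fixes u :: "'a::euclidean_space \<Rightarrow> real"
  assumes dom: "smooth_bounded_domain \<Omega>"
    and cont: "continuous_on (closure \<Omega>) u" and tw: "twice_differentiable_on \<Omega> u"
    and lap: "\<forall>x\<in>\<Omega>. 0 \<le> laplacian u x"
    and bc: "\<forall>x\<in>frontier \<Omega>. normal_derivative_nonpos \<Omega> u x"
  shows "\<exists>M. \<forall>x\<in>closure \<Omega>. u x = M"
proof -
  have \<Omega>: "open \<Omega>" "connected \<Omega>" "\<Omega> \<noteq> {}" "bounded \<Omega>"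
    using dom unfolding smooth_bounded_domain_def by auto
  then obtain x0 where x0: "x0 \<in> closure \<Omega>" "\<forall>x\<in>closure \<Omega>. u x \<le> u x0"
    using continuous_attains_sup[OF _ _ cont] by (meson closure_eq_empty compact_closure)
  have max: "\<forall>x\<in>\<Omega>. u x \<le> u x0" using x0 closure_subset by blast
  show ?thesis
  proof (cases "\<exists>x1\<in>\<Omega>. u x1 = u x0")
    case True
    then have "\<forall>x\<in>\<Omega>. u x = u x0"
      using strong_maximum_principle[OF \<Omega>(1,2) tw continuous_on_subset[OF cont closure_subset] lap max]
      by blast
    then have "\<Omega> \<subseteq> {x \<in> closure \<Omega>. u x = u x0}" using closure_subset by auto
    moreover have "closed {x \<in> closure \<Omega>. u x = u x0}"
      by (rule continuous_closed_preimage_constant[OF cont]) simp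
    ultimately have "closure \<Omega> \<subseteq> {x \<in> closure \<Omega>. u x = u x0}" by (rule closure_minimal)
    then show ?thesis by auto
  next
    case False
    then have x0_frontier: "x0 \<in> frontier \<Omega>" using frontier_if_not_in_open[OF \<Omega>(1) x0(1)] by auto
    have "\<forall>x\<in>\<Omega> \<inter> ball x0 1. u x < u x0" using False max by force
    from hopf_lemma_boundary[OF dom x0_frontier cont tw _ x0(2) zero_less_one this] bc lap x0_frontier
    show ?thesis by simp
  qed
qed

lemma strictly_subharmonic_no_max:
  fixes u :: "'a::euclidean_space \<Rightarrow> real"
  assumes dom: "smooth_bounded_domain \<Omega>"
    and cont: "continuous_on (closure \<Omega>) u" and tw: "twice_differentiable_on \<Omega> u"
    and x0: "x0 \<in> closure \<Omega>" and max: "\<forall>x\<in>closure \<Omega>. u x \<le> u x0"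
    and bc: "x0 \<in> frontier \<Omega> \<Longrightarrow> normal_derivative_nonpos \<Omega> u x0"
    and V: "open V" "x0 \<in> V" and lap: "\<forall>x\<in>V \<inter> \<Omega>. 0 < laplacian u x"
  shows False
proof -
  have \<Omega>: "open \<Omega>" using dom unfolding smooth_bounded_domain_def by auto
  have no_interior_max: "u x < u x0" if "x \<in> V \<inter> \<Omega>" for x
  proof (rule ccontr)
    assume "\<not> u x < u x0"
    then have "\<forall>w\<in>V \<inter> \<Omega>. u w \<le> u x" using max closure_subset by force
    then have "laplacian u x \<le> 0"
      using laplacian_nonpos_at_max[OF open_Int[OF V(1) \<Omega>] that] twice_differentiable_on_subset[OF tw]
      by blast
    then show False using lap that by force
  qed
  show False
  proof (cases "x0 \<in> \<Omega>")
    case True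
    then show False using no_interior_max[of x0] V by auto
  next
    case False
    then have x0_frontier: "x0 \<in> frontier \<Omega>" by (rule frontier_if_not_in_open[OF \<Omega> x0])
    obtain r where r: "0 < r" "ball x0 r \<subseteq> V" using V open_contains_ball by blast
    show False
    proof (rule hopf_lemma_boundary[OF dom x0_frontier cont tw bc[OF x0_frontier] max r(1)])
      show "\<forall>x\<in>\<Omega> \<inter> ball x0 r. u x < u x0" using no_interior_max r(2) by blast
      show "\<forall>x\<in>\<Omega> \<inter> ball x0 r. 0 \<le> laplacian u x" using lap r(2) less_imp_le by blast
    qed
  qed
qed

section \<open>Integral bounds and the endemic equilibrium\<close>

lemma holder_continuous_on_imp_continuous_on:
  fixes f :: "'a::euclidean_space \<Rightarrow> real"
  assumes "holder_continuous_on A f"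
  shows "continuous_on A f"
proof -
  obtain \<alpha> C where \<alpha>: "0 < \<alpha>" and H: "\<forall>x\<in>A. \<forall>y\<in>A. \<bar>f x - f y\<bar> \<le> C * dist x y powr \<alpha>"
    using assms unfolding holder_continuous_on_def by blast
  define C' where "C' = \<bar>C\<bar> + 1"
  have C': "0 < C'" "C \<le> C'" unfolding C'_def by auto
  show ?thesis unfolding continuous_on_iff
  proof (intro ballI allI impI)
    fix x e assume x: "x \<in> A" and e: "(0::real) < e"
    define d where "d = (e / C') powr (1 / \<alpha>)"
    have "d powr \<alpha> = e / C'" unfolding d_def powr_powr using \<alpha> e C' by simp
    show "\<exists>d>0. \<forall>x'\<in>A. dist x' x < d \<longrightarrow> dist (f x') (f x) < e"
    proof (intro exI[of _ d] conjI ballI impI)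
      show "0 < d" unfolding d_def using e C' by simp
      fix x' assume x': "x' \<in> A" and "dist x' x < d"
      have "dist x' x powr \<alpha> < d powr \<alpha>"
        by (rule powr_less_mono2[OF \<alpha> _ \<open>dist x' x < d\<close>]) simp
      then have "dist x' x powr \<alpha> < e / C'" using \<open>d powr \<alpha> = e / C'\<close> by simp
      have "\<bar>f x' - f x\<bar> \<le> C * dist x' x powr \<alpha>" using H x x' by blast
      also have "\<dots> \<le> C' * dist x' x powr \<alpha>" using C' by (intro mult_right_mono) auto
      also have "\<dots> < e" using \<open>dist x' x powr \<alpha> < e / C'\<close> C' by (simp add: field_simps)
      finally show "dist (f x') (f x) < e" by (simp add: dist_real_def)
    qed
  qed
qed

lemma C1_closure_imp_continuous_on: "C1_closure \<Omega> u \<Longrightarrow> continuous_on (closure \<Omega>) u"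
  unfolding C1_closure_def continuous_on_eq_continuous_within
  by (auto intro: differentiable_imp_continuous_within)

lemma fmax_upper:
  assumes "bounded \<Omega>" "continuous_on (closure \<Omega>) f" "x \<in> closure \<Omega>"
  shows "f x \<le> fmax \<Omega> f"
  unfolding fmax_def using assms
  by (intro cSup_upper imageI bounded_imp_bdd_above compact_imp_bounded compact_continuous_image) auto

lemma has_integral_const_measure:
  assumes "\<Omega> \<in> lmeasurable"
  shows "((\<lambda>x. c) has_integral c * measure lebesgue \<Omega>) \<Omega>"
proof -
  have "((\<lambda>x. 1) has_integral measure lebesgue \<Omega>) \<Omega>"
    using integrable_integral[OF integrable_on_const[OF assms]] by (simp add: lmeasure_integral[OF assms])
  from has_integral_cmul[OF this, of c] show ?thesis by simp
qed

lemma has_integral_le_const_measure: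
  fixes f :: "'a::euclidean_space \<Rightarrow> real"
  assumes "(f has_integral N) \<Omega>" "\<Omega> \<in> lmeasurable" "\<forall>x\<in>\<Omega>. f x \<le> c"
  shows "N \<le> c * measure lebesgue \<Omega>"
  using has_integral_le[OF assms(1) has_integral_const_measure[OF assms(2)]] assms(3) by blast

lemma has_integral_ge_const_measure:
  fixes f :: "'a::euclidean_space \<Rightarrow> real"
  assumes "(f has_integral N) \<Omega>" "\<Omega> \<in> lmeasurable" "\<forall>x\<in>\<Omega>. c \<le> f x"
  shows "c * measure lebesgue \<Omega> \<le> N"
  using has_integral_le[OF has_integral_const_measure[OF assms(2)] assms(1)] assms(3) by blast

lemma measure_lebesgue_open_pos:
  fixes \<Omega> :: "'a::euclidean_space set"
  assumes "open \<Omega>" "bounded \<Omega>" "\<Omega> \<noteq> {}"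
  shows "0 < measure lebesgue \<Omega>"
proof -
  obtain x r where "0 < r" "ball x r \<subseteq> \<Omega>" using assms(1,3) open_contains_ball by blast
  then have "measure lborel (ball x r) \<le> measure lebesgue \<Omega>"
    using measure_mono_fmeasurable[of "ball x r" \<Omega> lebesgue] lmeasurable_open[OF assms(2,1)]
    by (simp add: measure_completion)
  with content_ball_pos[OF \<open>0 < r\<close>, of x] show ?thesis by linarith
qed

lemma add_mult_powr_le_imp_le:
  fixes A r x y :: real
  assumes "0 \<le> A" "0 < r" "0 \<le> x" "y + A * y powr r \<le> x + A * x powr r"
  shows "y \<le> x"
proof (rule ccontr)
  assume "\<not> y \<le> x"
  then have "A * x powr r \<le> A * y powr r" using assms by (intro mult_left_mono powr_mono2) auto
  with assms(4) \<open>\<not> y \<le> x\<close> show False by linarith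
qed

lemma reaction_less_removal:
  fixes \<beta> \<gamma> F m p q s i :: real
  assumes p: "0 < p" "p < 1" and q: "0 < q" and \<beta>: "0 < \<beta>" "\<beta> \<le> F * \<gamma>" and \<gamma>: "0 < \<gamma>"
    and s: "0 \<le> s" "s \<le> m"
    and i: "F powr (1 / (1 - p)) * m powr (q / (1 - p)) < i"
  shows "\<beta> * s powr q * i powr p < \<gamma> * i"
proof -
  have "0 < F" using \<beta> \<gamma> by (smt (verit) mult_nonpos_nonneg)
  define Fm where "Fm = F * m powr q"
  have "0 \<le> Fm" unfolding Fm_def using \<open>0 < F\<close> by simp
  have i_pos: "0 < i" using i le_less_trans[OF _ i] by (simp add: zero_le_mult_iff)
  have "Fm = (Fm powr (1 / (1 - p))) powr (1 - p)"
    unfolding powr_powr using p \<open>0 \<le> Fm\<close> by (simp add: powr_one)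
  also have "\<dots> < i powr (1 - p)"
    using p i \<open>0 < F\<close> unfolding Fm_def by (intro powr_less_mono2) (simp_all add: powr_mult powr_powr)
  finally have Fm_less: "Fm < i powr (1 - p)" .
  have "\<beta> * s powr q \<le> (F * \<gamma>) * m powr q"
    using \<beta> s q \<open>0 < F\<close> \<gamma> by (intro mult_mono powr_mono2) auto
  then have "\<beta> * s powr q * i powr p \<le> \<gamma> * Fm * i powr p"
    unfolding Fm_def using i_pos by (intro mult_right_mono) (simp_all add: mult_ac)
  also have "\<dots> < \<gamma> * i powr (1 - p) * i powr p"
    using Fm_less \<gamma> i_pos by (intro mult_strict_right_mono mult_strict_left_mono) auto
  also have "\<dots> = \<gamma> * i" using i_pos by (simp add: mult.assoc flip: powr_add)
  finally show ?thesis .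
qed

lemma endemic_equilibrium_boundary_derivatives:
  assumes EE: "endemic_equilibrium \<Omega> dS dI N p q \<beta> \<gamma> S I" and x: "x \<in> frontier \<Omega>"
  shows "(S has_derivative frechet_derivative S (at x within closure \<Omega>)) (at x within closure \<Omega>)"
    and "(I has_derivative frechet_derivative I (at x within closure \<Omega>)) (at x within closure \<Omega>)"
    and "frechet_derivative S (at x within closure \<Omega>) (outward_normal \<Omega> x) = 0"
    and "frechet_derivative I (at x within closure \<Omega>) (outward_normal \<Omega> x) = 0"
proof -
  have "x \<in> closure \<Omega>" using x by (simp add: frontier_def)
  then show "(S has_derivative frechet_derivative S (at x within closure \<Omega>)) (at x within closure \<Omega>)"
    "(I has_derivative frechet_derivative I (at x within closure \<Omega>)) (at x within closure \<Omega>)"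
    using EE unfolding endemic_equilibrium_def C1_closure_def frechet_derivative_works by blast+
  show "frechet_derivative S (at x within closure \<Omega>) (outward_normal \<Omega> x) = 0"
    "frechet_derivative I (at x within closure \<Omega>) (outward_normal \<Omega> x) = 0"
    using EE x unfolding endemic_equilibrium_def normal_deriv_def by auto
qed

lemma endemic_equilibrium_weighted_sum_const:
  fixes \<Omega> :: "'a::euclidean_space set"
  assumes dom: "smooth_bounded_domain \<Omega>" and EE: "endemic_equilibrium \<Omega> dS dI N p q \<beta> \<gamma> S I"
  shows "\<exists>\<kappa>. \<forall>x\<in>closure \<Omega>. dS * S x + dI * I x = \<kappa>"
proof (rule subharmonic_neumann_const[OF dom])
  have \<Omega>: "open \<Omega>" using dom unfolding smooth_bounded_domain_def by auto
  have tw: "twice_differentiable_on \<Omega> S" "twice_differentiable_on \<Omega> I"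
    using EE C2_on_imp_twice_differentiable_on unfolding endemic_equilibrium_def by auto
  show "continuous_on (closure \<Omega>) (\<lambda>x. dS * S x + dI * I x)"
    using EE C1_closure_imp_continuous_on unfolding endemic_equilibrium_def
    by (auto intro!: continuous_intros)
  show "twice_differentiable_on \<Omega> (\<lambda>x. dS * S x + dI * I x)"
    by (rule twice_differentiable_on_lincomb[OF \<Omega> tw])
  show "\<forall>x\<in>\<Omega>. 0 \<le> laplacian (\<lambda>x. dS * S x + dI * I x) x"
  proof
    fix x assume x: "x \<in> \<Omega>"
    have "dS * laplacian S x - \<beta> x * S x powr q * I x powr p + \<gamma> x * I x = 0"
      "dI * laplacian I x + \<beta> x * S x powr q * I x powr p - \<gamma> x * I x = 0"
      using EE x unfolding endemic_equilibrium_def by auto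
    then show "0 \<le> laplacian (\<lambda>x. dS * S x + dI * I x) x"
      using laplacian_lincomb[OF \<Omega> x tw, of dS dI] by linarith
  qed
  show "\<forall>x\<in>frontier \<Omega>. normal_derivative_nonpos \<Omega> (\<lambda>x. dS * S x + dI * I x) x"
  proof
    fix x assume "x \<in> frontier \<Omega>"
    note D = endemic_equilibrium_boundary_derivatives[OF EE this]
    have "((\<lambda>x. dS * S x + dI * I x) has_derivative (\<lambda>h. dS * frechet_derivative S (at x within closure \<Omega>) h
        + dI * frechet_derivative I (at x within closure \<Omega>) h)) (at x within closure \<Omega>)"
      using D(1,2) by (intro derivative_intros)
    then show "normal_derivative_nonpos \<Omega> (\<lambda>x. dS * S x + dI * I x) x"
      unfolding normal_derivative_nonpos_def using D(3,4) by force
  qed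
qed

lemma endemic_equilibrium_laplacian_I_pos:
  assumes EE: "endemic_equilibrium \<Omega> dS dI N p q \<beta> \<gamma> S I" and dI: "0 < dI" and x: "x \<in> \<Omega>"
    and "\<beta> x * S x powr q * I x powr p < \<gamma> x * I x"
  shows "0 < laplacian I x"
proof -
  have "dI * laplacian I x = \<gamma> x * I x - \<beta> x * S x powr q * I x powr p"
    using EE x unfolding endemic_equilibrium_def by (auto simp: algebra_simps)
  then have "0 < dI * laplacian I x" using assms(4) by simp
  then show ?thesis using dI by (simp add: zero_less_mult_iff)
qed

lemma endemic_equilibrium_S_le_level:
  assumes dom: "smooth_bounded_domain \<Omega>" and EE: "endemic_equilibrium \<Omega> dS dI N p q \<beta> \<gamma> S I"
    and \<kappa>: "\<forall>x\<in>closure \<Omega>. dS * S x + dI * I x = \<kappa>" and d: "0 < dS" "0 < dI"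
  shows "\<forall>x\<in>closure \<Omega>. S x \<le> \<kappa> / dS" and "0 \<le> \<kappa> / dS"
proof -
  have nn: "\<forall>x\<in>closure \<Omega>. 0 \<le> S x \<and> 0 \<le> I x" using EE unfolding endemic_equilibrium_def by auto
  then show S_le: "\<forall>x\<in>closure \<Omega>. S x \<le> \<kappa> / dS"
    using \<kappa> d by (auto simp: field_simps add_increasing2)
  obtain x where "x \<in> closure \<Omega>"
    using dom closure_subset unfolding smooth_bounded_domain_def by blast
  then show "0 \<le> \<kappa> / dS" using nn S_le by force
qed

lemma endemic_equilibrium_I_le:
  fixes \<Omega> :: "'a::euclidean_space set"
  assumes dom: "smooth_bounded_domain \<Omega>"
    and \<beta>: "\<forall>x\<in>closure \<Omega>. 0 < \<beta> x" "continuous_on (closure \<Omega>) \<beta>"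
    and \<gamma>: "\<forall>x\<in>closure \<Omega>. 0 < \<gamma> x" "continuous_on (closure \<Omega>) \<gamma>"
    and p: "0 < p" "p < 1" and q: "0 < q" and dI: "0 < dI"
    and EE: "endemic_equilibrium \<Omega> dS dI N p q \<beta> \<gamma> S I"
    and S_le: "\<forall>x\<in>closure \<Omega>. S x \<le> m"
  shows "\<forall>x\<in>closure \<Omega>. I x \<le> fmax \<Omega> (\<lambda>x. \<beta> x / \<gamma> x) powr (1 / (1 - p)) * m powr (q / (1 - p))"
proof -
  have \<Omega>: "bounded \<Omega>" "closure \<Omega> \<noteq> {}" using dom unfolding smooth_bounded_domain_def by auto
  have nn: "\<forall>x\<in>closure \<Omega>. 0 \<le> S x \<and> 0 \<le> I x"
    and contS: "continuous_on (closure \<Omega>) S" and contI: "continuous_on (closure \<Omega>) I"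
    and twI: "twice_differentiable_on \<Omega> I"
    using EE C1_closure_imp_continuous_on C2_on_imp_twice_differentiable_on
    unfolding endemic_equilibrium_def by auto
  obtain x0 where x0: "x0 \<in> closure \<Omega>" "\<forall>x\<in>closure \<Omega>. I x \<le> I x0"
    using continuous_attains_sup[OF compact_closure[THEN iffD2, OF \<Omega>(1)] \<Omega>(2) contI] by blast
  define B where "B = fmax \<Omega> (\<lambda>x. \<beta> x / \<gamma> x) powr (1 / (1 - p)) * m powr (q / (1 - p))"
  define g where "g x = \<gamma> x * I x - \<beta> x * S x powr q * I x powr p" for x
  have "I x0 \<le> B"
  proof (rule ccontr)
    assume "\<not> I x0 \<le> B"
    have "\<beta> x0 / \<gamma> x0 \<le> fmax \<Omega> (\<lambda>x. \<beta> x / \<gamma> x)"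
      using \<beta> \<gamma> x0(1) by (intro fmax_upper[OF \<Omega>(1)] continuous_intros) auto
    then have "0 < g x0"
      using reaction_less_removal[OF p q, of "\<beta> x0" _ "\<gamma> x0" "S x0" m "I x0"] \<beta> \<gamma> x0(1) S_le nn
        \<open>\<not> I x0 \<le> B\<close>
      unfolding g_def B_def by (simp add: divide_le_eq)
    moreover have "continuous_on (closure \<Omega>) g"
      unfolding g_def using nn p q
      by (intro continuous_intros \<beta> \<gamma> contS contI continuous_on_powr') auto
    moreover obtain V where V: "open V" "V \<inter> closure \<Omega> = g -` {0<..} \<inter> closure \<Omega>"
      using \<open>continuous_on (closure \<Omega>) g\<close> unfolding continuous_on_open_invariant
      by (meson open_greaterThan)
    ultimately have "x0 \<in> V" using x0(1) by blast
    show False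
    proof (rule strictly_subharmonic_no_max[OF dom contI twI x0 _ V(1) \<open>x0 \<in> V\<close>])
      show "normal_derivative_nonpos \<Omega> I x0" if "x0 \<in> frontier \<Omega>"
        using endemic_equilibrium_boundary_derivatives(2,4)[OF EE that]
        unfolding normal_derivative_nonpos_def by auto
      show "\<forall>x\<in>V \<inter> \<Omega>. 0 < laplacian I x"
      proof
        fix x assume x: "x \<in> V \<inter> \<Omega>"
        then have "0 < g x" using V(2) closure_subset by blast
        then show "0 < laplacian I x"
          using endemic_equilibrium_laplacian_I_pos[OF EE dI] x unfolding g_def by simp
      qed
    qed
  qed
  then show ?thesis using x0(2) unfolding B_def by force
qed

lemma endemic_equilibrium_level_le_mean:
  assumes EE: "endemic_equilibrium \<Omega> dS dI N p q \<beta> \<gamma> S I" and \<Omega>: "\<Omega> \<in> lmeasurable"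
    and \<kappa>: "\<forall>x\<in>closure \<Omega>. dS * S x + dI * I x = \<kappa>" and d: "0 < dS" "dI \<le> dS"
  shows "\<kappa> / dS * measure lebesgue \<Omega> \<le> N"
proof -
  have "((\<lambda>x. S x + I x) has_integral N) \<Omega>" using EE unfolding endemic_equilibrium_def by blast
  moreover have "\<kappa> / dS \<le> S x + I x" if "x \<in> \<Omega>" for x
  proof -
    have "x \<in> closure \<Omega>" using that closure_subset by blast
    then have "dI * I x \<le> dS * I x" "dS * S x + dI * I x = \<kappa>"
      using EE \<kappa> d unfolding endemic_equilibrium_def by (auto intro: mult_right_mono)
    then have "\<kappa> \<le> dS * (S x + I x)" by (simp add: distrib_left)
    then show ?thesis using d by (simp add: divide_le_eq mult.commute)
  qed
  ultimately show ?thesis using has_integral_ge_const_measure[OF _ \<Omega>] by blast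
qed

theorem lemma5p2:
  fixes \<Omega> :: "'a::euclidean_space set"
    and \<beta> \<gamma> S I :: "'a \<Rightarrow> real"
    and dS dI N p q Nstar :: real
  assumes dom: "smooth_bounded_domain \<Omega>"
    and beta_pos: "\<forall>x\<in>closure \<Omega>. 0 < \<beta> x"
    and gamma_pos: "\<forall>x\<in>closure \<Omega>. 0 < \<gamma> x"
    and beta_holder: "holder_continuous_on (closure \<Omega>) \<beta>"
    and gamma_holder: "holder_continuous_on (closure \<Omega>) \<gamma>"
    and N_pos: "0 < N" and q_pos: "0 < q" and p_pos: "0 < p" and p_lt1: "p < 1"
    and dS_pos: "0 < dS" and dI_pos: "0 < dI"
    and EE: "endemic_equilibrium \<Omega> dS dI N p q \<beta> \<gamma> S I"
    and Nstar_pos: "0 < Nstar"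
    and Nstar_eq: "N / measure lebesgue \<Omega> =
        Nstar + (fmax \<Omega> (\<lambda>x. \<beta> x / \<gamma> x)) powr (1 / (1 - p)) * Nstar powr (q / (1 - p))"
  shows "(\<forall>x\<in>closure \<Omega>. (dS * S x + dI * I x) / dS \<ge> Nstar) \<and>
         (dS \<ge> dI \<longrightarrow> (\<forall>x\<in>closure \<Omega>. (dS * S x + dI * I x) / dS \<le> N / measure lebesgue \<Omega>))"
proof -
  have \<Omega>0: "open \<Omega>" "bounded \<Omega>" "\<Omega> \<noteq> {}" using dom unfolding smooth_bounded_domain_def by auto
  have \<Omega>: "\<Omega> \<in> lmeasurable" "0 < measure lebesgue \<Omega>"
    by (rule lmeasurable_open[OF \<Omega>0(2,1)], rule measure_lebesgue_open_pos[OF \<Omega>0])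
  have N: "((\<lambda>x. S x + I x) has_integral N) \<Omega>" using EE unfolding endemic_equilibrium_def by auto
  obtain \<kappa> where \<kappa>: "\<forall>x\<in>closure \<Omega>. dS * S x + dI * I x = \<kappa>"
    using endemic_equilibrium_weighted_sum_const[OF dom EE] by blast
  define m where "m = \<kappa> / dS"
  have level: "\<forall>x\<in>closure \<Omega>. (dS * S x + dI * I x) / dS = m" using \<kappa> unfolding m_def by simp
  have S_le: "\<forall>x\<in>closure \<Omega>. S x \<le> m" and "0 \<le> m"
    using endemic_equilibrium_S_le_level[OF dom EE \<kappa> dS_pos dI_pos] unfolding m_def by auto
  define A where "A = fmax \<Omega> (\<lambda>x. \<beta> x / \<gamma> x) powr (1 / (1 - p))"
  define r where "r = q / (1 - p)"
  have "\<forall>x\<in>closure \<Omega>. I x \<le> A * m powr r"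
    using endemic_equilibrium_I_le[OF dom beta_pos _ gamma_pos _ p_pos p_lt1 q_pos dI_pos EE S_le]
      holder_continuous_on_imp_continuous_on beta_holder gamma_holder unfolding A_def r_def by blast
  with S_le have "N \<le> (m + A * m powr r) * measure lebesgue \<Omega>"
    using closure_subset[of \<Omega>] by (intro has_integral_le_const_measure[OF N \<Omega>(1)]) (auto intro: add_mono)
  then have "N / measure lebesgue \<Omega> \<le> m + A * m powr r" using \<Omega>(2) by (simp add: pos_divide_le_eq)
  then have "Nstar + A * Nstar powr r \<le> m + A * m powr r" using Nstar_eq unfolding A_def r_def by simp
  moreover have "0 \<le> A" "0 < r" unfolding A_def r_def using p_lt1 q_pos by auto
  ultimately have "Nstar \<le> m" using add_mult_powr_le_imp_le \<open>0 \<le> m\<close> by blast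
  moreover have "m * measure lebesgue \<Omega> \<le> N" if "dI \<le> dS"
    using endemic_equilibrium_level_le_mean[OF EE \<Omega>(1) \<kappa> dS_pos that] unfolding m_def .
  ultimately show ?thesis using level by (simp add: pos_le_divide_eq[OF \<Omega>(2)])
qed

end
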